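(* Let $S\subseteq 2^E$ be a powerful set with $|E|=n\ge 2$. Then $r_S(E)=n-1$ if and only if $S$ has a star element.
   Context: A set $S\subseteq 2^E$ ($E$ finite) is powerful if for every $X\subseteq E$ the number of members of $S$ contained in $X$ is a power of 2. Its rank function is $r_S(X)=\log_2\big(|S|/|\{Y\in S:Y\subseteq E\setminus X\}|\big)$. An element $e\in E$ is a star of $S$ if there exists $T\subseteq 2^{E\setminus\{e\}}$ such that $S=\{X: X\in T\}\cup\{X\cup\{e\}: X\subseteq E\setminus\{e\},\ X\notin T\}$. *)

theory Defs
  imports Complex_Main
begin

definition powerful :: "'a set \<Rightarrow> 'a set set \<Rightarrow> bool" where
  "powerful E S \<longleftrightarrow> S \<subseteq> Pow E \<and>
     (\<forall>X. X \<subseteq> E \<longrightarrow> (\<exists>k::nat. card {Y \<in> S. Y \<subseteq> X} = 2 ^ k))"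

definition rank_S :: "'a set \<Rightarrow> 'a set set \<Rightarrow> 'a set \<Rightarrow> real" where
  "rank_S E S X = log 2 (real (card S) / real (card {Y \<in> S. Y \<subseteq> E - X}))"

definition is_star :: "'a set \<Rightarrow> 'a set set \<Rightarrow> 'a \<Rightarrow> bool" where
  "is_star E S e \<longleftrightarrow> e \<in> E \<and> (\<exists>T. T \<subseteq> Pow (E - {e}) \<and>
     S = T \<union> {insert e X | X. X \<subseteq> E - {e} \<and> X \<notin> T})"

end

theory Submission
  imports Defs
begin

(* Write f(Z) for the number of members of S contained in Z; powerfulness says that f(Z) is a
   power of two for every Z contained in E. Call Z half full if f(Z) = 2^(|Z| - 1). Since the empty
   set lies in S, r_S(E) = log2 |S| = log2 f(E), so the rank condition says that E is half full.

   Counting the members of S below Z by the pairs {X, X + x} shows that x is a star of S restricted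
   to Z exactly when every Y with x in Y contained in Z is half full. So the stars of S are the
   elements lying in no subset of E that fails to be half full, and the theorem reduces to: if the
   union of two sets is half full, then so is one of them. This is proved by induction on the size of
   the union; the inputs are that f takes only power-of-two values, inclusion-exclusion over one or
   two deleted elements, and the fact that if Z is half full but Z - x is not, then x is a star of Z. *)

section \<open>Counting the members of a set family below a set\<close>

definition count_between :: "'a set set \<Rightarrow> 'a set \<Rightarrow> 'a set \<Rightarrow> nat" where
  "count_between S P Z = card {Y \<in> S. P \<subseteq> Y \<and> Y \<subseteq> Z}"

definition count_below :: "'a set set \<Rightarrow> 'a set \<Rightarrow> nat" where
  "count_below S Z = card {Y \<in> S. Y \<subseteq> Z}"

definition half_full :: "'a set set \<Rightarrow> 'a set \<Rightarrow> bool" where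
  "half_full S Z \<longleftrightarrow> 2 * count_below S Z = 2 ^ card Z"

definition star_on :: "'a set set \<Rightarrow> 'a set \<Rightarrow> 'a \<Rightarrow> bool" where
  "star_on S Z x \<longleftrightarrow> (\<forall>X \<subseteq> Z - {x}. X \<in> S \<longleftrightarrow> insert x X \<notin> S)"

definition pair_count :: "'a set set \<Rightarrow> 'a \<Rightarrow> 'a set \<Rightarrow> nat" where
  "pair_count S x X = of_bool (X \<in> S) + of_bool (insert x X \<in> S)"

lemma count_below_eq_count_between: "count_below S Z = count_between S {} Z"
  by (simp add: count_below_def count_between_def)

lemma finite_members_below: "finite Z \<Longrightarrow> finite {Y \<in> S. P Y \<and> Y \<subseteq> Z}"
  by (rule finite_subset[of _ "Pow Z"]) auto

lemma count_between_split:
  assumes "finite Z"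
  shows "count_between S P Z = count_between S (insert u P) Z + count_between S P (Z - {u})"
proof -
  have "{Y \<in> S. P \<subseteq> Y \<and> Y \<subseteq> Z} =
      {Y \<in> S. insert u P \<subseteq> Y \<and> Y \<subseteq> Z} \<union> {Y \<in> S. P \<subseteq> Y \<and> Y \<subseteq> Z - {u}}"
    by auto
  also have "card \<dots> = count_between S (insert u P) Z + count_between S P (Z - {u})"
    unfolding count_between_def
    by (rule card_Un_disjoint) (use assms finite_members_below in auto)
  finally show ?thesis
    unfolding count_between_def .
qed

lemma count_below_delete_two:
  assumes "finite Z"
  shows "count_below S Z + count_below S (Z - {x} - {y}) =
    count_between S {x, y} Z + count_below S (Z - {x}) + count_below S (Z - {y})"
proof -
  have "count_below S Z = count_between S {x} Z + count_below S (Z - {x})"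
    using count_between_split[OF assms, of S "{}" x] by (simp add: count_below_eq_count_between)
  moreover have "count_between S {x} Z = count_between S {x, y} Z + count_between S {x} (Z - {y})"
    using count_between_split[OF assms, of S "{x}" y] by (simp add: insert_commute)
  moreover have "count_below S (Z - {y}) = count_between S {x} (Z - {y}) + count_below S (Z - {x} - {y})"
    using count_between_split[of "Z - {y}" S "{}" x] assms
    by (simp add: count_below_eq_count_between Diff_insert2[symmetric] insert_commute)
  ultimately show ?thesis
    by linarith
qed

lemma card_supersets_within:
  assumes "finite Z" "P \<subseteq> Z"
  shows "card {V. P \<subseteq> V \<and> V \<subseteq> Z} = 2 ^ (card Z - card P)"
proof -
  have "bij_betw (\<lambda>D. P \<union> D) (Pow (Z - P)) {V. P \<subseteq> V \<and> V \<subseteq> Z}"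
    by (rule bij_betw_byWitness[where f' = "\<lambda>V. V - P"]) (use assms in blast)+
  then have "card {V. P \<subseteq> V \<and> V \<subseteq> Z} = card (Pow (Z - P))"
    by (simp add: bij_betw_same_card)
  also have "\<dots> = 2 ^ (card Z - card P)"
    using assms by (simp add: card_Pow card_Diff_subset finite_subset)
  finally show ?thesis .
qed

lemma count_between_le:
  assumes "finite Z" "P \<subseteq> Z"
  shows "count_between S P Z \<le> 2 ^ (card Z - card P)"
  unfolding count_between_def card_supersets_within[OF assms, symmetric]
  by (rule card_mono) (use assms in \<open>auto intro: finite_subset[of _ "Pow Z"]\<close>)

lemma count_between_eq_pow_iff:
  assumes "finite Z" "P \<subseteq> Z"
  shows "count_between S P Z = 2 ^ (card Z - card P) \<longleftrightarrow> (\<forall>V. P \<subseteq> V \<longrightarrow> V \<subseteq> Z \<longrightarrow> V \<in> S)"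
proof -
  have fin: "finite {V. P \<subseteq> V \<and> V \<subseteq> Z}"
    using assms(1) by (auto intro: finite_subset[of _ "Pow Z"])
  have "count_between S P Z = 2 ^ (card Z - card P) \<longleftrightarrow>
      {Y \<in> S. P \<subseteq> Y \<and> Y \<subseteq> Z} = {V. P \<subseteq> V \<and> V \<subseteq> Z}"
  proof
    assume "count_between S P Z = 2 ^ (card Z - card P)"
    then show "{Y \<in> S. P \<subseteq> Y \<and> Y \<subseteq> Z} = {V. P \<subseteq> V \<and> V \<subseteq> Z}"
      by (intro card_subset_eq[OF fin])
        (auto simp: count_between_def card_supersets_within[OF assms])
  qed (simp add: count_between_def card_supersets_within[OF assms])
  then show ?thesis
    by blast
qed

lemma count_between_mono:
  assumes "finite Z'" "P' \<subseteq> P" "Z \<subseteq> Z'"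
  shows "count_between S P Z \<le> count_between S P' Z'"
  unfolding count_between_def
  by (rule card_mono) (use assms in \<open>auto intro: finite_members_below\<close>)

lemma count_below_le: "finite Z \<Longrightarrow> count_below S Z \<le> 2 ^ card Z"
  using count_between_le[of Z "{}" S] by (simp add: count_below_eq_count_between)

lemma count_below_eq_pow_iff: "finite Z \<Longrightarrow> count_below S Z = 2 ^ card Z \<longleftrightarrow> Pow Z \<subseteq> S"
  using count_between_eq_pow_iff[of Z "{}" S] by (auto simp: count_below_eq_count_between)

lemma count_below_mono: "finite Z' \<Longrightarrow> Z \<subseteq> Z' \<Longrightarrow> count_below S Z \<le> count_below S Z'"
  using count_between_mono[of Z' "{}" "{}" Z S] by (simp add: count_below_eq_count_between)

lemma subset_if_count_below_eq:
  assumes "finite Z" "Z' \<subseteq> Z" "count_below S Z' = count_below S Z" "V \<in> S" "V \<subseteq> Z"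
  shows "V \<subseteq> Z'"
proof -
  have "{Y \<in> S. Y \<subseteq> Z'} = {Y \<in> S. Y \<subseteq> Z}"
    using assms(1-3) unfolding count_below_def
    by (intro card_subset_eq) (auto intro: finite_subset[of _ "Pow Z"])
  then show ?thesis
    using assms(4,5) by blast
qed

lemma count_below_Int_if_delete_eq:
  assumes "finite A" "\<And>y. y \<in> A - B \<Longrightarrow> count_below S (A - {y}) = count_below S A"
  shows "count_below S (A \<inter> B) = count_below S A"
proof -
  have "Y \<subseteq> B" if "Y \<in> S" "Y \<subseteq> A" for Y
    using subset_if_count_below_eq[OF assms(1) _ assms(2) that] that(2) by blast
  then have "{Y \<in> S. Y \<subseteq> A \<inter> B} = {Y \<in> S. Y \<subseteq> A}"
    by blast
  then show ?thesis
    by (simp add: count_below_def)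
qed

lemma count_below_insert:
  assumes "finite X" "x \<notin> X"
  shows "count_below S (insert x X) = (\<Sum>X' \<in> Pow X. pair_count S x X')"
proof -
  let ?T = "Pow X \<inter> {X'. insert x X' \<in> S}"
  have "count_below S (insert x X) = count_between S {x} (insert x X) + count_below S X"
    using count_between_split[of "insert x X" S "{}" x] assms
    by (simp add: count_below_eq_count_between)
  moreover have "count_between S {x} (insert x X) = card ?T"
  proof -
    have "Y \<in> insert x ` ?T" if "Y \<in> S" "x \<in> Y" "Y \<subseteq> insert x X" for Y
      using that by (intro image_eqI[of _ _ "Y - {x}"]) (auto simp: insert_absorb)
    then have "{Y \<in> S. {x} \<subseteq> Y \<and> Y \<subseteq> insert x X} = insert x ` ?T"
      by auto
    moreover have "inj_on (insert x) ?T"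
    proof (rule inj_onI)
      fix A B
      assume "A \<in> ?T" "B \<in> ?T" "insert x A = insert x B"
      moreover from this have "x \<notin> A" "x \<notin> B"
        using assms(2) by auto
      ultimately show "A = B"
        by (metis Diff_insert_absorb)
    qed
    ultimately show ?thesis
      by (simp add: count_between_def card_image)
  qed
  moreover have "count_below S X = card (Pow X \<inter> {X'. X' \<in> S})"
    unfolding count_below_def by (rule arg_cong[where f = card]) auto
  moreover have "(\<Sum>X' \<in> Pow X. pair_count S x X') = card (Pow X \<inter> {X'. X' \<in> S}) + card ?T"
    using assms(1) by (simp only: pair_count_def sum.distrib sum_of_bool_eq finite_Pow_iff of_nat_id)
  ultimately show ?thesis
    by linarith
qed

lemma half_full_iff: "card Z = Suc k \<Longrightarrow> half_full S Z \<longleftrightarrow> count_below S Z = 2 ^ k"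
  by (simp add: half_full_def)

lemma half_full_iff_delete:
  "finite Z \<Longrightarrow> x \<in> Z \<Longrightarrow> half_full S Z \<longleftrightarrow> count_below S Z = 2 ^ card (Z - {x})"
  by (metis card_Suc_Diff1 half_full_iff)

lemma not_half_full_empty: "\<not> half_full S {}"
  by (simp add: half_full_def)

lemma star_on_iff_pair_count: "star_on S Z x \<longleftrightarrow> (\<forall>X \<subseteq> Z - {x}. pair_count S x X = 1)"
  by (auto simp: star_on_def pair_count_def)

lemma star_on_subset: "star_on S Z x \<Longrightarrow> Y \<subseteq> Z \<Longrightarrow> star_on S Y x"
  unfolding star_on_def by blast

lemma count_below_eq_sum_pair_count:
  assumes "finite Z" "x \<in> Z"
  shows "count_below S Z = (\<Sum>X \<in> Pow (Z - {x}). pair_count S x X)"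
proof -
  have "count_below S Z = count_below S (insert x (Z - {x}))"
    using assms(2) by (simp add: insert_absorb)
  also have "\<dots> = (\<Sum>X \<in> Pow (Z - {x}). pair_count S x X)"
    by (rule count_below_insert) (use assms(1) in auto)
  finally show ?thesis .
qed

lemma half_full_if_star_on:
  assumes "finite Z" "x \<in> Z" "star_on S Z x"
  shows "half_full S Z"
proof -
  have "count_below S Z = (\<Sum>X \<in> Pow (Z - {x}). 1)"
    unfolding count_below_eq_sum_pair_count[OF assms(1,2)]
    using assms(3) by (intro sum.cong) (auto simp: star_on_iff_pair_count)
  also have "\<dots> = 2 ^ card (Z - {x})"
    using assms(1) by (simp add: card_Pow)
  finally show ?thesis
    unfolding half_full_iff_delete[OF assms(1,2)] .
qed

lemma star_on_if_pair_count_except: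
  assumes "finite Z" "x \<in> Z" "half_full S Z" "G \<subseteq> Z - {x}"
    and "\<And>X. X \<subseteq> Z - {x} \<Longrightarrow> X \<noteq> G \<Longrightarrow> pair_count S x X = 1"
  shows "star_on S Z x"
proof -
  have fin: "finite (Pow (Z - {x}))"
    using assms(1) by simp
  have "2 ^ card (Z - {x}) = count_below S Z"
    using assms(3) unfolding half_full_iff_delete[OF assms(1,2)] by simp
  also have "\<dots> = pair_count S x G + (\<Sum>X \<in> Pow (Z - {x}) - {G}. pair_count S x X)"
    unfolding count_below_eq_sum_pair_count[OF assms(1,2)]
    using fin assms(4) by (intro sum.remove) auto
  also have "(\<Sum>X \<in> Pow (Z - {x}) - {G}. pair_count S x X) = (\<Sum>X \<in> Pow (Z - {x}) - {G}. 1)"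
    using assms(5) by (intro sum.cong) auto
  also have "\<dots> = 2 ^ card (Z - {x}) - 1"
    using fin assms(1,4) by (simp add: card_Pow)
  finally have "pair_count S x G + (2 ^ card (Z - {x}) - 1) = 2 ^ card (Z - {x})" ..
  then have "pair_count S x G = 1"
    using one_le_power[of "2::nat" "card (Z - {x})"] by linarith
  then show ?thesis
    using assms(5) by (auto simp: star_on_iff_pair_count)
qed

lemma star_on_iff_half_full:
  assumes "finite Z" "x \<in> Z"
  shows "star_on S Z x \<longleftrightarrow> (\<forall>Y. x \<in> Y \<longrightarrow> Y \<subseteq> Z \<longrightarrow> half_full S Y)"
proof (intro iffI allI impI)
  fix Y
  assume "star_on S Z x" "x \<in> Y" "Y \<subseteq> Z"
  show "half_full S Y"
    by (rule half_full_if_star_on[OF finite_subset[OF \<open>Y \<subseteq> Z\<close> assms(1)] \<open>x \<in> Y\<close>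
          star_on_subset[OF \<open>star_on S Z x\<close> \<open>Y \<subseteq> Z\<close>]])
next
  assume half_full: "\<forall>Y. x \<in> Y \<longrightarrow> Y \<subseteq> Z \<longrightarrow> half_full S Y"
  have "pair_count S x X = 1" if "finite X" "X \<subseteq> Z - {x}" for X
    using that
  proof (induction X rule: finite_psubset_induct)
    case (psubset X)
    have "star_on S (insert x X) x"
    proof (rule star_on_if_pair_count_except)
      show "half_full S (insert x X)"
        using half_full psubset.prems assms(2) by blast
      show "pair_count S x X' = 1" if "X' \<subseteq> insert x X - {x}" "X' \<noteq> X" for X'
        using that psubset.prems by (intro psubset.IH) auto
    qed (use psubset.hyps psubset.prems in auto)
    then show ?case
      using psubset.prems by (auto simp: star_on_iff_pair_count)
  qed
  moreover have "finite X" if "X \<subseteq> Z - {x}" for X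
    using that assms(1) by (simp add: finite_subset)
  ultimately show "star_on S Z x"
    by (simp add: star_on_iff_pair_count)
qed

lemma pair_count_eq_one_if_counts:
  assumes fin: "finite Z" and card: "card Z = m + 3" and xy: "x \<in> Z" "y \<in> Z" "x \<noteq> y"
    and counts: "count_below S Z = 2 ^ (m + 2)" "count_below S (Z - {y}) = 2 ^ (m + 1)"
      "count_below S (Z - {x}) \<le> 2 ^ m"
    and half: "half_full S (Z - {x} - {y})"
    and X: "y \<in> X" "X \<subseteq> Z - {x}"
  shows "pair_count S x X = 1"
proof -
  have "card (Z - {x} - {y}) = Suc m"
    using fin card xy by simp
  then have "count_below S (Z - {x} - {y}) = 2 ^ m"
    using half by (simp add: half_full_iff)
  moreover have "count_below S (Z - {x} - {y}) \<le> count_below S (Z - {x})"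
    using fin by (intro count_below_mono) auto
  ultimately have eq: "count_below S (Z - {x} - {y}) = count_below S (Z - {x})"
    and delete_x: "count_below S (Z - {x}) = 2 ^ m"
    using counts(3) by linarith+
  have "X \<notin> S"
    using subset_if_count_below_eq[of "Z - {x}" "Z - {x} - {y}" S X] fin eq X by auto
  have "count_between S {x, y} Z = 2 ^ (m + 1)"
    using count_below_delete_two[OF fin, of S x y] counts(1,2) eq delete_x by (simp add: power_add)
  moreover have sub: "{x, y} \<subseteq> Z" and "card Z - card {x, y} = m + 1"
    using xy card by auto
  ultimately have "\<forall>V. {x, y} \<subseteq> V \<longrightarrow> V \<subseteq> Z \<longrightarrow> V \<in> S"
    using count_between_eq_pow_iff[OF fin sub] by simp
  then have "insert x X \<in> S"
    using xy X by blast
  with \<open>X \<notin> S\<close> show ?thesis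
    by (simp add: pair_count_def)
qed

lemma count_between_insert_eq_pow_if_star_on:
  assumes fin: "finite Z" and star: "star_on S Z u" and sub: "insert u P \<subseteq> Z" "u \<notin> P" "P \<noteq> {}"
    and avoid: "\<And>V. V \<in> S \<Longrightarrow> V \<subseteq> Z - {u} \<Longrightarrow> V \<inter> P = {}"
  shows "count_between S (insert u P) Z = 2 ^ (card Z - card (insert u P))"
proof -
  have "V \<in> S" if V: "insert u P \<subseteq> V" "V \<subseteq> Z" for V
  proof -
    have "V - {u} \<subseteq> Z - {u}" "(V - {u}) \<inter> P \<noteq> {}"
      using V sub(2,3) by auto
    then have "V - {u} \<notin> S" "insert u (V - {u}) \<notin> S \<longleftrightarrow> V - {u} \<in> S"
      using avoid star unfolding star_on_def by blast+
    then show "V \<in> S"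
      using V by (simp add: insert_absorb)
  qed
  then show ?thesis
    using count_between_eq_pow_iff[OF fin sub(1)] by blast
qed

lemma star_on_if_delete_full:
  assumes "finite Z" "x \<in> Z" "count_below S (Z - {x}) = 2 ^ card (Z - {x})"
    and "count_below S (Z - {x}) = count_below S Z"
  shows "star_on S Z x"
proof -
  have "Pow (Z - {x}) \<subseteq> S"
    using assms(1,3) by (simp add: count_below_eq_pow_iff)
  moreover have "insert x X \<notin> S" if "X \<subseteq> Z - {x}" for X
    using subset_if_count_below_eq[OF assms(1) _ assms(4), of "insert x X"] that assms(2) by blast
  ultimately show ?thesis
    by (auto simp: star_on_def)
qed

lemma star_on_if_is_star:
  assumes "is_star E S e"
  shows "star_on S E e"
proof -
  obtain T where T: "T \<subseteq> Pow (E - {e})"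
    and S: "S = T \<union> {insert e X | X. X \<subseteq> E - {e} \<and> X \<notin> T}"
    using assms unfolding is_star_def by blast
  show ?thesis
    unfolding star_on_def
  proof (intro allI impI)
    fix X
    assume X: "X \<subseteq> E - {e}"
    then have "e \<notin> X" "insert e X \<notin> T"
      using T by auto
    have "insert e X = insert e X' \<longleftrightarrow> X = X'" if "X' \<subseteq> E - {e}" for X'
      using that \<open>e \<notin> X\<close> insert_ident[of e X X'] by blast
    then have "insert e X \<in> S \<longleftrightarrow> X \<notin> T"
      using X \<open>insert e X \<notin> T\<close> unfolding S by blast
    moreover have "X \<in> S \<longleftrightarrow> X \<in> T"
      using \<open>e \<notin> X\<close> unfolding S by blast
    ultimately show "X \<in> S \<longleftrightarrow> insert e X \<notin> S"
      by blast
  qed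
qed

lemma is_star_if_star_on:
  assumes "S \<subseteq> Pow E" "e \<in> E" "star_on S E e"
  shows "is_star E S e"
proof -
  let ?T = "{X \<in> S. e \<notin> X}"
  have "V \<in> ?T \<union> {insert e X | X. X \<subseteq> E - {e} \<and> X \<notin> ?T}" if "V \<in> S" "e \<in> V" for V
  proof -
    have "V = insert e (V - {e})" "V - {e} \<subseteq> E - {e}"
      using that assms(1) by auto
    moreover from this have "V - {e} \<notin> S"
      using assms(3) \<open>V \<in> S\<close> unfolding star_on_def by metis
    ultimately show ?thesis
      by blast
  qed
  moreover have "insert e X \<in> S" if "X \<subseteq> E - {e}" "X \<notin> ?T" for X
    using that assms(3) unfolding star_on_def by blast
  ultimately have "S = ?T \<union> {insert e X | X. X \<subseteq> E - {e} \<and> X \<notin> ?T}"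
    by blast
  moreover have "?T \<subseteq> Pow (E - {e})"
    using assms(1) by blast
  ultimately show ?thesis
    using assms(2) unfolding is_star_def by blast
qed

lemma is_star_iff_star_on:
  assumes "S \<subseteq> Pow E"
  shows "is_star E S e \<longleftrightarrow> e \<in> E \<and> star_on S E e"
proof
  assume star: "is_star E S e"
  then have "e \<in> E"
    by (simp add: is_star_def)
  with star_on_if_is_star[OF star] show "e \<in> E \<and> star_on S E e"
    by blast
qed (use is_star_if_star_on[OF assms] in blast)

section \<open>Powerful families\<close>

locale powerful_family =
  fixes E :: "'a set" and S :: "'a set set"
  assumes finite_ground: "finite E" and powerful: "powerful E S"
begin

lemma subset_Pow: "S \<subseteq> Pow E"
  using powerful by (simp add: powerful_def)

lemma finite_if_subset: "Z \<subseteq> E \<Longrightarrow> finite Z"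
  using finite_ground finite_subset by blast

lemma count_below_power: "Z \<subseteq> E \<Longrightarrow> \<exists>k. count_below S Z = 2 ^ k"
  using powerful by (simp add: powerful_def count_below_def)

lemma empty_mem: "{} \<in> S"
proof -
  obtain k where "card {Y \<in> S. Y \<subseteq> {}} = 2 ^ k"
    using count_below_power[of "{}"] by (auto simp: count_below_def)
  then have "{Y \<in> S. Y \<subseteq> {}} \<noteq> {}"
    by (metis card.empty power_not_zero zero_neq_numeral)
  then show ?thesis
    by auto
qed

lemma count_below_pos:
  assumes "finite Z"
  shows "0 < count_below S Z"
proof -
  obtain k where "count_below S {} = 2 ^ k"
    using count_below_power by blast
  then have "0 < count_below S {}"
    by simp
  then show ?thesis
    using count_below_mono[OF assms empty_subsetI, of S] by linarith
qed

lemma card_eq_count_below: "card S = count_below S E"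
proof -
  have "{Y \<in> S. Y \<subseteq> E} = S"
    using subset_Pow by blast
  then show ?thesis
    by (simp add: count_below_def)
qed

lemma delete_half_full_if_delete_small:
  assumes "Z \<subseteq> E" "card Z = m + 3" "count_below S Z = 2 ^ (m + 2)"
    and "x \<in> Z" "count_below S (Z - {x}) \<le> 2 ^ m" "y \<in> Z" "y \<noteq> x"
  shows "count_below S (Z - {y}) = 2 ^ (m + 1)"
proof -
  have fin: "finite Z"
    using assms(1) finite_if_subset by blast
  obtain j where j: "count_below S (Z - {y}) = 2 ^ j"
    using count_below_power assms(1) by blast
  have card_y: "card (Z - {y}) = m + 2" and card_xy: "card (Z - {x} - {y}) = m + 1"
    using assms(2,4,6,7) fin by auto
  have "j \<le> m + 2"
    using count_below_le[of "Z - {y}" S] fin j card_y by (simp del: power_Suc)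
  moreover have "j \<noteq> m + 2"
  proof
    assume "j = m + 2"
    then have "Pow (Z - {x} - {y}) \<subseteq> S"
      using fin j card_y count_below_eq_pow_iff[of "Z - {y}" S] by auto
    then have "count_below S (Z - {x} - {y}) = 2 ^ (m + 1)"
      using fin card_xy count_below_eq_pow_iff[of "Z - {x} - {y}" S] by simp
    moreover have "count_below S (Z - {x} - {y}) \<le> count_below S (Z - {x})"
      using fin by (intro count_below_mono) auto
    ultimately have "2 ^ (m + 1) \<le> (2::nat) ^ m"
      using assms(5) by linarith
    then show False
      by simp
  qed
  moreover have "\<not> j \<le> m"
  proof
    assume "j \<le> m"
    then have "count_below S (Z - {y}) \<le> 2 ^ m"
      using j by simp
    moreover have "count_between S {x, y} Z \<le> 2 ^ (m + 1)"
      using count_between_le[of Z "{x, y}" S] fin assms(2,4,6,7) by simp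
    moreover have "0 < count_below S (Z - {x} - {y})"
      using fin by (simp add: count_below_pos)
    ultimately show False
      using count_below_delete_two[OF fin, of S x y] assms(3,5) by (simp add: power_add)
  qed
  ultimately have "j = m + 1"
    by linarith
  then show ?thesis
    using j by simp
qed

lemma star_on_if_delete_small:
  assumes Z: "Z \<subseteq> E" and card: "card Z = m + 3" and count: "count_below S Z = 2 ^ (m + 2)"
    and x: "x \<in> Z" and small: "count_below S (Z - {x}) \<le> 2 ^ m"
    and IH: "\<And>y. y \<in> Z - {x} \<Longrightarrow> half_full S (Z - {y}) \<Longrightarrow> \<not> half_full S (Z - {y} - {x}) \<Longrightarrow>
      star_on S (Z - {y}) x"
  shows "star_on S Z x"
proof -
  have fin: "finite Z"
    using Z finite_if_subset by blast
  have delete: "count_below S (Z - {y}) = 2 ^ (m + 1)" if "y \<in> Z - {x}" for y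
    using delete_half_full_if_delete_small[OF Z card count x small] that by blast
  define G where "G = {y \<in> Z - {x}. \<not> half_full S (Z - {y} - {x})}"
  \<comment> \<open>Every \<open>X \<noteq> G\<close> has pair count 1: if \<open>X\<close> misses some \<open>y \<in> G\<close>, then \<open>x\<close> is a
    star of \<open>Z - {y}\<close> by \<open>IH\<close>; otherwise \<open>X\<close> contains some \<open>y \<notin> G\<close>, and the counts
    of \<open>Z\<close> with \<open>x\<close> and \<open>y\<close> deleted force \<open>X \<notin> S\<close> and \<open>insert x X \<in> S\<close>. The total
    count then fixes the pair count of \<open>G\<close> as well.\<close>
  show ?thesis
  proof (rule star_on_if_pair_count_except[OF fin x _ _])
    show "half_full S Z"
      using fin card count by (simp add: half_full_iff)
    show "G \<subseteq> Z - {x}"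
      by (auto simp: G_def)
  next
    fix X
    assume X: "X \<subseteq> Z - {x}" "X \<noteq> G"
    show "pair_count S x X = 1"
    proof (cases "G \<subseteq> X")
      case False
      then obtain y where y: "y \<in> G" "y \<notin> X"
        by blast
      have "half_full S (Z - {y})"
        using delete[of y] y fin card by (simp add: G_def half_full_iff)
      then have "star_on S (Z - {y}) x"
        using IH y unfolding G_def by blast
      then show ?thesis
        using X y unfolding star_on_iff_pair_count by blast
    next
      case True
      then obtain y where y: "y \<in> X" "y \<notin> G"
        using X by blast
      then have y': "y \<in> Z - {x}" "half_full S (Z - {x} - {y})"
        using X by (auto simp: G_def Diff_insert2[symmetric] insert_commute)
      then show ?thesis
        using pair_count_eq_one_if_counts[OF fin card x _ _ count delete[OF y'(1)] small y'(2)] y X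
        by auto
    qed
  qed
qed

lemma star_on_if_delete_not_half_full:
  "Z \<subseteq> E \<Longrightarrow> half_full S Z \<Longrightarrow> x \<in> Z \<Longrightarrow> \<not> half_full S (Z - {x}) \<Longrightarrow> star_on S Z x"
proof (induction "card Z" arbitrary: Z rule: less_induct)
  case less
  have fin: "finite Z"
    using less.prems(1) finite_if_subset by blast
  define n where "n = card (Z - {x})"
  obtain k where k: "count_below S (Z - {x}) = 2 ^ k"
    using count_below_power less.prems(1) by blast
  have count: "count_below S Z = 2 ^ n"
    using less.prems(2) half_full_iff_delete[OF fin less.prems(3)] by (simp add: n_def)
  have "k \<le> n"
    using count_below_le[of "Z - {x}" S] fin k by (simp add: n_def)
  moreover have "n \<noteq> Suc k"
    using less.prems(4) fin k half_full_iff[of "Z - {x}" k S] by (auto simp: n_def)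
  ultimately consider "k = n" | "k + 2 \<le> n"
    by linarith
  then show ?case
  proof cases
    case 1
    then show ?thesis
      using star_on_if_delete_full[OF fin less.prems(3)] k count by (simp add: n_def)
  next
    case 2
    define m where "m = n - 2"
    have m: "n = m + 2" "k \<le> m"
      using 2 by (auto simp: m_def)
    show ?thesis
    proof (rule star_on_if_delete_small[OF less.prems(1) _ _ less.prems(3)])
      show "card Z = m + 3" "count_below S Z = 2 ^ (m + 2)"
        using m count fin less.prems(3) by (simp_all add: n_def)
      show "count_below S (Z - {x}) \<le> 2 ^ m"
        using m k by simp
      show "star_on S (Z - {y}) x"
        if "y \<in> Z - {x}" "half_full S (Z - {y})" "\<not> half_full S (Z - {y} - {x})" for y
        using that less.prems(1,3) card_Diff1_less[OF fin, of y] by (intro less.hyps) auto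
    qed
  qed
qed

lemma not_half_full_delete_half_full:
  assumes A: "A \<subseteq> E" and not_half: "\<not> half_full S A" and y: "y \<in> A"
    and half: "half_full S (A - {y})"
  obtains a where "card A = a + 2" "count_below S A = 2 ^ a" "count_below S (A - {y}) = 2 ^ a"
proof -
  have fin: "finite A"
    using A finite_if_subset by blast
  have card: "card A = Suc (card (A - {y}))"
    using card_Suc_Diff1[OF fin y] by simp
  obtain a where a: "card (A - {y}) = Suc a"
    using half fin by (cases "card (A - {y})") (auto simp: half_full_def)
  have delete: "count_below S (A - {y}) = 2 ^ a"
    using half fin a by (simp add: half_full_iff)
  obtain k where k: "count_below S A = 2 ^ k"
    using count_below_power A by blast
  have "count_below S (A - {y}) \<le> count_below S A"
    using fin by (intro count_below_mono) auto
  then have "a \<le> k"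
    using delete k by simp
  have "count_below S A = count_between S {y} A + count_below S (A - {y})"
    using count_between_split[OF fin, of S "{}" y] by (simp add: count_below_eq_count_between)
  moreover have "count_between S {y} A \<le> 2 ^ Suc a"
    using count_between_le[OF fin, of "{y}" S] y card a by simp
  moreover have "(0::nat) < 2 ^ a" "(2::nat) ^ Suc a = 2 * 2 ^ a" "(2::nat) ^ (a + 2) = 4 * 2 ^ a"
    by simp_all
  ultimately have "(2::nat) ^ k < 2 ^ (a + 2)"
    using delete k by linarith
  then have "k < a + 2"
    by (rule power_less_imp_less_exp[rotated]) simp
  moreover have "k \<noteq> a + 1"
    using not_half fin card a k by (auto simp: half_full_iff)
  ultimately have "k = a"
    using \<open>a \<le> k\<close> by linarith
  then show ?thesis
    using that card a k delete by simp
qed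

lemma not_half_full_deletions_half_full:
  assumes A: "A \<subseteq> E" and not_half: "\<not> half_full S A" and y: "y \<in> A - B"
    and half: "\<And>y. y \<in> A - B \<Longrightarrow> half_full S (A - {y})"
  obtains a where "card A = a + 2" "count_below S A = 2 ^ a" "count_below S (A \<inter> B) = 2 ^ a"
proof -
  obtain a where "card A = a + 2" "count_below S A = 2 ^ a"
    using not_half_full_delete_half_full[OF A not_half _ half[OF y]] y by blast
  moreover have "count_below S (A - {y'}) = count_below S A" if "y' \<in> A - B" for y'
    using not_half_full_delete_half_full[OF A not_half _ half[OF that]] that by (metis DiffD1)
  then have "count_below S (A \<inter> B) = count_below S A"
    using A finite_if_subset by (intro count_below_Int_if_delete_eq) auto
  ultimately show ?thesis
    using that by simp
qed

text \<open>The next two lemmas refute the shape of a smallest counterexample to \<open>half_full_Un\<close>.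
  In the first, the stars \<open>y1\<close> of \<open>A \<union> B - {y2}\<close> and \<open>y2\<close> of \<open>A \<union> B - {y1}\<close> put at least
  \<open>2 * 2 ^ a\<close> members containing \<open>x1\<close> and \<open>x2\<close> into \<open>S\<close>, while inclusion-exclusion over
  \<open>x1, x2\<close> leaves room for only \<open>2 ^ a\<close>.\<close>

lemma minimal_split_two_two_absurd:
  assumes W: "A \<union> B \<subseteq> E" "half_full S (A \<union> B)"
    and delete: "\<And>v. v \<in> A \<union> B \<Longrightarrow> half_full S (A \<union> B - {v})"
    and not_half: "\<not> half_full S B"
    and AB: "A - B = {y1, y2}" "y1 \<noteq> y2" and BA: "B - A = {x1, x2}" "x1 \<noteq> x2"
    and cards: "card A = a + 2" "card B = a + 2" "card (A \<inter> B) = a"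
    and counts: "count_below S A = 2 ^ a" "count_below S B = count_below S (A \<inter> B)"
  shows False
proof -
  define W where "W = A \<union> B"
  have fin: "finite W"
    using W(1) finite_if_subset by (simp add: W_def)
  have card: "card W = a + 4"
    using card_Un_Int[of A B] fin cards by (simp add: W_def)
  have "count_below S W = 2 ^ (a + 3)"
    using W(2) fin card half_full_iff[of W "a + 3" S] by (simp add: W_def)
  moreover have "count_below S (W - {x}) = 2 ^ (a + 2)" if "x \<in> {x1, x2}" for x
    using that BA delete[of x] fin card half_full_iff[of "W - {x}" "a + 2" S] by (auto simp: W_def)
  moreover have "W - {x1} - {x2} = A"
    using BA by (auto simp: W_def)
  ultimately have pair: "count_between S {x1, x2} W = 2 ^ a"
    using count_below_delete_two[OF fin, of S x1 x2] counts(1) by (simp add: power_add)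
  have full: "count_between S {u, x1, x2} (W - {v}) = 2 ^ a" if "{u, v} = {y1, y2}" "u \<noteq> v" for u v
  proof (rule trans[OF count_between_insert_eq_pow_if_star_on])
    have u: "u \<in> W - {v}" "u \<notin> B" "W - {v} - {u} = B" "v \<in> W" "W - {v} \<subseteq> E"
      using that AB BA W(1) by (auto simp: W_def)
    then show "star_on S (W - {v}) u"
      using delete[of v] not_half by (intro star_on_if_delete_not_half_full) (auto simp: W_def)
    show "V \<inter> {x1, x2} = {}" if "V \<in> S" "V \<subseteq> W - {v} - {u}" for V
      using subset_if_count_below_eq[of B "A \<inter> B" S V] counts(2) that u(3) BA W(1) finite_if_subset
      by auto
    show "insert u {x1, x2} \<subseteq> W - {v}" "u \<notin> {x1, x2}"
      using u(1,2) that AB BA by (auto simp: W_def)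
    then show "2 ^ (card (W - {v}) - card (insert u {x1, x2})) = (2::nat) ^ a"
      using BA(2) card fin u(4) by simp
  qed (use fin in auto)
  have "2 ^ a + 2 ^ a \<le> count_between S {y1, x1, x2} W + count_between S {x1, x2} (W - {y1})"
    using full[of y1 y2] full[of y2 y1, OF insert_commute] AB(2)
      count_between_mono[OF fin, of "{y1, x1, x2}" "{y1, x1, x2}" "W - {y2}" S]
      count_between_mono[of "W - {y1}" "{x1, x2}" "{y2, x1, x2}" "W - {y1}" S] fin
    by fastforce
  also have "\<dots> = count_between S {x1, x2} W"
    using count_between_split[OF fin, of S "{x1, x2}" y1] by simp
  finally show False
    using pair by simp
qed

lemma minimal_split_absurd:
  assumes W: "A \<union> B \<subseteq> E" "half_full S (A \<union> B)"
    and delete: "\<And>v. v \<in> A \<union> B \<Longrightarrow> half_full S (A \<union> B - {v})"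
    and not_half: "\<not> half_full S A" "\<not> half_full S B"
    and A: "card A = a + 2" "count_below S A = 2 ^ a" "count_below S (A \<inter> B) = 2 ^ a"
    and B: "card B = a + 2" "count_below S B = 2 ^ a"
  shows False
proof -
  have fin: "finite A" "finite B"
    using W(1) finite_if_subset by auto
  have "(2::nat) ^ a \<le> 2 ^ card (A \<inter> B)"
    using count_below_le[of "A \<inter> B" S] fin A(3) by simp
  then have "a \<le> card (A \<inter> B)"
    by simp
  moreover have "card A = card (A \<inter> B) + card (A - B)" "card B = card (A \<inter> B) + card (B - A)"
    using card_Int_Diff[OF fin(1), of B] card_Int_Diff[OF fin(2), of A] by (simp_all add: Int_commute)
  moreover have "B - A \<noteq> {}"
    using W(2) not_half(1) by (metis Diff_eq_empty_iff Un_absorb2)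
  then have "card (B - A) \<noteq> 0"
    using fin(2) by simp
  ultimately consider "card (B - A) = 1" | "card (A \<inter> B) = a" "card (A - B) = 2" "card (B - A) = 2"
    using A(1) B(1) by linarith
  then show False
  proof cases
    case 1
    then obtain x where "B - A = {x}"
      by (auto simp: card_Suc_eq)
    then have "A \<union> B - {x} = A" "x \<in> A \<union> B"
      by auto
    then show False
      using delete[of x] not_half(1) by simp
  next
    case 2
    then obtain y1 y2 x1 x2 where AB: "A - B = {y1, y2}" "y1 \<noteq> y2" and BA: "B - A = {x1, x2}" "x1 \<noteq> x2"
      by (meson card_2_iff)
    have "count_below S B = count_below S (A \<inter> B)"
      using A(3) B(2) by simp
    with minimal_split_two_two_absurd[OF W delete not_half(2) AB BA A(1) B(1) 2(1) A(2)] show False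
      by blast
  qed
qed

lemma half_full_Un:
  "A \<union> B \<subseteq> E \<Longrightarrow> half_full S (A \<union> B) \<Longrightarrow> half_full S A \<or> half_full S B"
proof (induction "card (A \<union> B)" arbitrary: A B rule: less_induct)
  case less
  have fin: "finite (A \<union> B)"
    using less.prems(1) finite_if_subset by blast
  show ?case
  proof (rule ccontr)
    assume "\<not> (half_full S A \<or> half_full S B)"
    then have not_half: "\<not> half_full S A" "\<not> half_full S B"
      by auto
    have delete: "half_full S (A \<union> B - {v})" if "v \<in> A \<union> B" for v
    proof (rule ccontr)
      assume "\<not> half_full S (A \<union> B - {v})"
      then have "star_on S (A \<union> B) v"
        using star_on_if_delete_not_half_full less.prems that by blast
      then show False
        using star_on_iff_half_full[OF fin that] that not_half by blast
    qed
    have delete_A: "half_full S (A - {y})" if "y \<in> A - B" for y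
      using less.hyps[of "A - {y}" B] less.prems(1) delete[of y] not_half(2) that card_Diff1_less[OF fin, of y]
      by (auto simp: Un_Diff)
    have delete_B: "half_full S (B - {y})" if "y \<in> B - A" for y
      using less.hyps[of A "B - {y}"] less.prems(1) delete[of y] not_half(1) that card_Diff1_less[OF fin, of y]
      by (auto simp: Un_Diff)
    have "A - B \<noteq> {}" "B - A \<noteq> {}"
      using less.prems(2) not_half by (metis Diff_eq_empty_iff Un_absorb1 Un_absorb2)+
    then obtain y x where "y \<in> A - B" "x \<in> B - A"
      by blast
    obtain a where A: "card A = a + 2" "count_below S A = 2 ^ a" "count_below S (A \<inter> B) = 2 ^ a"
      using not_half_full_deletions_half_full[OF _ not_half(1) \<open>y \<in> A - B\<close> delete_A] less.prems(1) by blast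
    obtain b where B: "card B = b + 2" "count_below S B = 2 ^ b" "count_below S (B \<inter> A) = 2 ^ b"
      using not_half_full_deletions_half_full[OF _ not_half(2) \<open>x \<in> B - A\<close> delete_B] less.prems(1) by blast
    have "a = b"
      using A(3) B(3) by (simp add: Int_commute)
    then show False
      using minimal_split_absurd[OF less.prems delete not_half A] B by simp
  qed
qed

lemma ex_star_on_if_half_full:
  assumes "half_full S E"
  shows "\<exists>e \<in> E. star_on S E e"
proof -
  define N where "N = {Y. Y \<subseteq> E \<and> \<not> half_full S Y}"
  have "finite N"
    unfolding N_def using finite_ground by (auto intro: finite_subset[of _ "Pow E"])
  moreover have "{} \<in> N"
    by (simp add: N_def not_half_full_empty)
  ultimately obtain M where M: "M \<in> N" and maximal: "\<And>Y. Y \<in> N \<Longrightarrow> M \<subseteq> Y \<Longrightarrow> M = Y"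
    using finite_has_maximal[of N] by blast
  have "M \<subset> E"
    using M assms by (auto simp: N_def)
  then obtain e where e: "e \<in> E" "e \<notin> M"
    by blast
  have "half_full S Y" if "e \<in> Y" "Y \<subseteq> E" for Y
  proof (rule ccontr)
    assume "\<not> half_full S Y"
    then have "M \<union> Y \<in> N"
      using M that half_full_Un[of M Y] by (auto simp: N_def)
    then show False
      using maximal[of "M \<union> Y"] e that by blast
  qed
  then show ?thesis
    using star_on_iff_half_full[OF finite_ground e(1)] e(1) by blast
qed

lemma rank_ground_eq_iff_half_full: "rank_S E S E = real (card E) - 1 \<longleftrightarrow> half_full S E"
proof -
  obtain k where k: "card S = 2 ^ k"
    using count_below_power[of E] card_eq_count_below by auto
  have "{Y \<in> S. Y \<subseteq> E - E} = {{}}"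
    using empty_mem by auto
  then have "rank_S E S E = log 2 (real (card S))"
    by (simp add: rank_S_def)
  also have "\<dots> = real k"
    by (rule log2_of_power_eq[OF k, symmetric])
  finally have "rank_S E S E = real (card E) - 1 \<longleftrightarrow> real (Suc k) = real (card E)"
    by (simp add: eq_diff_eq add.commute)
  also have "\<dots> \<longleftrightarrow> 2 ^ Suc k = (2::nat) ^ card E"
    by (simp only: of_nat_eq_iff power_inject_exp)
  also have "\<dots> \<longleftrightarrow> half_full S E"
    using k card_eq_count_below by (simp add: half_full_def)
  finally show ?thesis .
qed

end

theorem proposition6:
  fixes E :: "'a set" and S :: "'a set set"
  assumes "finite E" and "card E \<ge> 2" and "powerful E S"
  shows "rank_S E S E = real (card E) - 1 \<longleftrightarrow> (\<exists>e. is_star E S e)"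
proof -
  interpret powerful_family E S
    using assms(1,3) by unfold_locales
  have "rank_S E S E = real (card E) - 1 \<longleftrightarrow> half_full S E"
    by (rule rank_ground_eq_iff_half_full)
  also have "\<dots> \<longleftrightarrow> (\<exists>e \<in> E. star_on S E e)"
    using ex_star_on_if_half_full half_full_if_star_on[OF finite_ground] by blast
  also have "\<dots> \<longleftrightarrow> (\<exists>e. is_star E S e)"
    using is_star_iff_star_on[OF subset_Pow] by blast
  finally show ?thesis .
qed

end
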